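(* Under the hypotheses of Theorem 1 (the closed-loop scheme of the setting below, with (i) $\mathcal P_i(0)$ feasible for all $i$ and $S_i^\ast(0)\cap S_j^\ast(0)=\emptyset$ for all $i\neq j$, (ii) nominal completion: whenever contingency variables satisfying (C1)–(C8) and (L) of $\mathcal P_i(t+1)$ exist, nominal variables exist so that (N1)–(N3) also hold, and (iii) $\ell_i^{\mathrm c}(0,0)=0$), the closed-loop execution is collision-free: $\mathcal B_i(t)\cap\mathcal B_j(t)=\emptyset$ for all $i\neq j$ and all $t\in\mathbb Z_+$.
   Context: Setting. Agents $\mathcal I=\{1,\dots,M\}$. Agent $i$ has dynamics $x_i(t+1)=f_i(x_i(t),u_i(t))$, $x_i\in\mathbb R^{n_i}$, $u_i\in\mathbb R^{m_i}$, admissible sets $\mathcal X_i\subset\mathbb R^{n_i}$, $\mathcal U_i\subset\mathbb R^{m_i}$, position $p_i=C_ix_i\in\mathbb R^{n_p}$, body radius $r_i>0$, body $\mathcal B_i(t)=\mathbb B(p_i(t),r_i)$ (closed Euclidean ball), reference state $x_i^{\mathrm{ref}}$. A deterministic safe-set generator $\Gamma_i$ assigns to each $x\in\mathcal X_i$ a ball $\Gamma_i(x)=\mathbb B(c_i(x),R_i(x))$. The active safe set at time $t$ is $S_i^\ast(t)=\mathbb B(c_i(t),R_i(t))$. $h:\mathbb R^{n_p}\to\mathbb R$ is a continuous obstacle function. Horizons $N_{\mathrm n},N_{\mathrm c}\in\mathbb Z_{>0}$. Costs: nominal stage and terminal costs $\ell_i^{\mathrm n},V_i^{\mathrm n}$,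 nonnegative offset cost $V_i^{\mathrm c}$, nonnegative contingency stage cost $\ell_i^{\mathrm c}$, weight $\gamma>0$. Problem $\mathcal P_i(t)$ (given $x_i(t)$, $S_i^\ast(t)$ and a bound $\hat J_i^{\mathrm c}(t)\ge0$): decision variables $x^{\mathrm n}_{i,(k|t)}$ ($k=0..N_{\mathrm n}$), $u^{\mathrm n}_{i,(k|t)}$ ($k=0..N_{\mathrm n}-1$), $x^{\mathrm c}_{i,(k|t)}$ ($k=0..N_{\mathrm c}$), $u^{\mathrm c}_{i,(k|t)}$ ($k=0..N_{\mathrm c}-1$), $\bar x^{\mathrm c}_i(t),\bar u^{\mathrm c}_i(t)$; write $p^\bullet_{i,(k|t)}=C_ix^\bullet_{i,(k|t)}$. Minimize $J_i=\sum_{k=0}^{N_{\mathrm n}-1}\ell_i^{\mathrm n}(x^{\mathrm n}_{i,(k|t)},u^{\mathrm n}_{i,(k|t)})+V_i^{\mathrm n}(x^{\mathrm n}_{i,(N_{\mathrm n}|t)},x_i^{\mathrm{ref}})+\gamma V_i^{\mathrm c}(\bar x^{\mathrm c}_i(t),x_i^{\mathrm{ref}})$ subject to: (N1) $x^{\mathrm n}_{i,(0|t)}=x_i(t)$; (N2) $u^{\mathrm n}_{i,(0|t)}=u^{\mathrm c}_{i,(0|t)}$; (N3) $x^{\mathrm n}_{i,(k+1|t)}=f_i(x^{\mathrm n}_{i,(k|t)},u^{\mathrm n}_{i,(k|t)})$, $x^{\mathrm n}_{i,(k+1|t)}\in\mathcal X_i$, $u^{\mathrm n}_{i,(k|t)}\in\mathcal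 U_i$ for $k=0..N_{\mathrm n}-1$; (C1) $x^{\mathrm c}_{i,(0|t)}=x_i(t)$; (C2) $x^{\mathrm c}_{i,(k+1|t)}=f_i(x^{\mathrm c}_{i,(k|t)},u^{\mathrm c}_{i,(k|t)})$ for $k=0..N_{\mathrm c}-1$; (C3) $x^{\mathrm c}_{i,(k+1|t)}\in\mathcal X_i$, $u^{\mathrm c}_{i,(k|t)}\in\mathcal U_i$ for $k=0..N_{\mathrm c}-1$; (C4) $h(p^{\mathrm c}_{i,(k|t)})\ge0$ for $k=0..N_{\mathrm c}$; (C5) $x^{\mathrm c}_{i,(N_{\mathrm c}|t)}=\bar x^{\mathrm c}_i(t)$, $\bar x^{\mathrm c}_i(t)=f_i(\bar x^{\mathrm c}_i(t),\bar u^{\mathrm c}_i(t))$, $(\bar x^{\mathrm c}_i(t),\bar u^{\mathrm c}_i(t))\in\mathcal X_i\times\mathcal U_i$; (C6) $C_i\bar x^{\mathrm c}_i(t)\in S_i^\ast(t)$; (C7) $\|p^{\mathrm c}_{i,(k|t)}-c_i(t)\|\le R_i(t)-r_i$ for $k=0..N_{\mathrm c}$; (C8) $\|p^{\mathrm c}_{i,(l|t)}-c_i(x^{\mathrm c}_{i,(k|t)})\|\le R_i(x^{\mathrm c}_{i,(k|t)})-r_i$ for all $0\le k\le l\le N_{\mathrm c}$; (L) $J_i^{\mathrm c}(t)\le\hat J_i^{\mathrm c}(t)$, where $J_i^{\mathrm c}(t):=\sum_{k=0}^{N_{\mathrm c}-1}\ell_i^{\mathrm c}(x^{\mathrm c}_{i,(k|t)}-\bar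 x^{\mathrm c}_i(t),u^{\mathrm c}_{i,(k|t)}-\bar u^{\mathrm c}_i(t))+V_i^{\mathrm c}(\bar x^{\mathrm c}_i(t),x_i^{\mathrm{ref}})$. Closed loop: at each $t$ each agent solves $\mathcal P_i(t)$, a star denotes the optimal solution, $J_i^{\mathrm c,\ast}(t)$ is $J_i^{\mathrm c}$ evaluated at it, the input $u_i(t)=u^{\mathrm c,\ast}_{i,(0|t)}=u^{\mathrm n,\ast}_{i,(0|t)}$ is applied and the state evolves exactly by $x_i(t+1)=f_i(x_i(t),u_i(t))$. Bound update: $\hat J_i^{\mathrm c}(t+1):=J_i^{\mathrm c,\ast}(t)-\ell_i^{\mathrm c}(x_i(t)-\bar x^{\mathrm c,\ast}_i(t),u_i(t)-\bar u^{\mathrm c,\ast}_i(t))$. Freeze-or-shift (FoS) update: $\tilde S_i(t+1):=\Gamma_i(x_i(t+1))$; $\chi_i(t)=1$ if some $j\neq i$ has $\tilde S_i(t+1)\cap\tilde S_j(t+1)\neq\emptyset$ or $\tilde S_i(t+1)\cap S_j^\ast(t)\neq\emptyset$, else $\chi_i(t)=0$; $S_i^\ast(t+1)=S_i^\ast(t)$ if $\chi_i(t)=1$ and $S_i^\ast(t+1)=\tilde S_i(t+1)$ if $\chi_i(t)=0$. *)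

theory Defs
  imports "HOL-Analysis.Analysis"
begin

text \<open>Candidate solution of problem P_i(t): nominal states/inputs, contingency
  states/inputs, and the terminal (offset) equilibrium pair.
  Sequences are indexed by the prediction step k; values outside the horizons are irrelevant.\<close>
record ('x, 'u) sol =
  xn :: "nat \<Rightarrow> 'x"
  un :: "nat \<Rightarrow> 'u"
  xc :: "nat \<Rightarrow> 'x"
  uc :: "nat \<Rightarrow> 'u"
  xb :: 'x
  ub :: 'u

definition Jc_cost ::
  "nat \<Rightarrow> ('x::real_vector \<Rightarrow> 'u::real_vector \<Rightarrow> real) \<Rightarrow> ('x \<Rightarrow> 'x \<Rightarrow> real) \<Rightarrow> 'x
   \<Rightarrow> ('x, 'u) sol \<Rightarrow> real" where
  "Jc_cost Nc lc Vc xref s =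
     (\<Sum>k<Nc. lc (xc s k - xb s) (uc s k - ub s)) + Vc (xb s) xref"

definition J_cost ::
  "nat \<Rightarrow> ('x \<Rightarrow> 'u \<Rightarrow> real) \<Rightarrow> ('x \<Rightarrow> 'x \<Rightarrow> real) \<Rightarrow> real \<Rightarrow> ('x \<Rightarrow> 'x \<Rightarrow> real) \<Rightarrow> 'x
   \<Rightarrow> ('x, 'u) sol \<Rightarrow> real" where
  "J_cost Nn lnom Vn \<gamma> Vc xref s =
     (\<Sum>k<Nn. lnom (xn s k) (un s k)) + Vn (xn s Nn) xref + \<gamma> * Vc (xb s) xref"

definition nom_feas ::
  "('x \<Rightarrow> 'u \<Rightarrow> 'x) \<Rightarrow> 'x set \<Rightarrow> 'u set \<Rightarrow> nat \<Rightarrow> 'x \<Rightarrow> ('x, 'u) sol \<Rightarrow> bool" where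
  "nom_feas f X U Nn x0 s \<longleftrightarrow>
     xn s 0 = x0 \<and>
     un s 0 = uc s 0 \<and>
     (\<forall>k<Nn. xn s (k+1) = f (xn s k) (un s k) \<and> xn s (k+1) \<in> X \<and> un s k \<in> U)"

text \<open>Contingency constraints (C1)--(C8) and (L), given the current state x0,
  active safe set cball c R and bound Jh.
  cG, RG: centre and radius of the safe-set generator Gamma_i.\<close>
definition cont_feas ::
  "('x::real_vector \<Rightarrow> 'u::real_vector \<Rightarrow> 'x) \<Rightarrow> 'x set \<Rightarrow> 'u set \<Rightarrow> ('x \<Rightarrow> 'p::euclidean_space)
   \<Rightarrow> ('x \<Rightarrow> 'p) \<Rightarrow> ('x \<Rightarrow> real) \<Rightarrow> ('p \<Rightarrow> real) \<Rightarrow> real \<Rightarrow> nat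
   \<Rightarrow> ('x \<Rightarrow> 'u \<Rightarrow> real) \<Rightarrow> ('x \<Rightarrow> 'x \<Rightarrow> real) \<Rightarrow> 'x
   \<Rightarrow> 'x \<Rightarrow> 'p \<Rightarrow> real \<Rightarrow> real \<Rightarrow> ('x, 'u) sol \<Rightarrow> bool" where
  "cont_feas f X U C cG RG h r Nc lc Vc xref x0 c R Jh s \<longleftrightarrow>
     xc s 0 = x0 \<and>
     (\<forall>k<Nc. xc s (k+1) = f (xc s k) (uc s k)) \<and>
     (\<forall>k<Nc. xc s (k+1) \<in> X \<and> uc s k \<in> U) \<and>
     (\<forall>k\<le>Nc. h (C (xc s k)) \<ge> 0) \<and>
     (xc s Nc = xb s \<and> xb s = f (xb s) (ub s) \<and> xb s \<in> X \<and> ub s \<in> U) \<and>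
     C (xb s) \<in> cball c R \<and>
     (\<forall>k\<le>Nc. norm (C (xc s k) - c) \<le> R - r) \<and>
     (\<forall>k l. k \<le> l \<and> l \<le> Nc \<longrightarrow> norm (C (xc s l) - cG (xc s k)) \<le> RG (xc s k) - r) \<and>
     Jc_cost Nc lc Vc xref s \<le> Jh"

text \<open>Freeze-or-shift flag chi_i(t), for agents 1..M with states x j t and
  active safe sets cball (cS j t) (RS j t).\<close>
definition fos_chi ::
  "nat \<Rightarrow> (nat \<Rightarrow> 'x \<Rightarrow> 'p::euclidean_space) \<Rightarrow> (nat \<Rightarrow> 'x \<Rightarrow> real) \<Rightarrow> (nat \<Rightarrow> nat \<Rightarrow> 'x)
   \<Rightarrow> (nat \<Rightarrow> nat \<Rightarrow> 'p) \<Rightarrow> (nat \<Rightarrow> nat \<Rightarrow> real) \<Rightarrow> nat \<Rightarrow> nat \<Rightarrow> bool" where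
  "fos_chi M cG RG x cS RS i t \<longleftrightarrow>
     (\<exists>j\<in>{1..M}. j \<noteq> i \<and>
        (cball (cG i (x i (t+1))) (RG i (x i (t+1))) \<inter> cball (cG j (x j (t+1))) (RG j (x j (t+1))) \<noteq> {}
         \<or> cball (cG i (x i (t+1))) (RG i (x i (t+1))) \<inter> cball (cS j t) (RS j t) \<noteq> {}))"

end

theory Submission
  imports Defs
begin

text \<open>Every agent's body stays inside its active safe set, by constraint (C7) at k = 0, so it
  suffices that (a) every problem P_i(t) stays feasible and (b) the active safe sets stay pairwise
  disjoint. For (a), the optimal contingency plan of time t, shifted by one step and padded with
  its equilibrium, satisfies (C1)--(C8) and (L) at time t+1: a frozen safe set still contains it by
  (C7), a shifted one contains it by (C8), and the cost bound (L) decreases exactly by the first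
  stage cost because the padding costs l^c(0,0) = 0; nominal completion then supplies the nominal
  part. For (b), an agent moves to a new safe set only if that set meets neither the new candidate
  nor the active safe set of any other agent, so disjointness survives every update.\<close>

definition shift_cont :: "nat \<Rightarrow> ('x, 'u) sol \<Rightarrow> ('x, 'u) sol" where
  "shift_cont Nc s = s\<lparr>xc := (\<lambda>k. xc s (min (k+1) Nc)),
                       uc := (\<lambda>k. if k+1 < Nc then uc s (k+1) else ub s)\<rparr>"

lemma Jc_cost_shift_cont:
  fixes lc :: "'x::real_vector \<Rightarrow> 'u::real_vector \<Rightarrow> real"
  assumes "0 < Nc" and "lc 0 0 = 0" and "xc s Nc = xb s"
  shows "Jc_cost Nc lc Vc xref (shift_cont Nc s)
           = Jc_cost Nc lc Vc xref s - lc (xc s 0 - xb s) (uc s 0 - ub s)"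
proof -
  obtain m where m: "Nc = Suc m" using \<open>0 < Nc\<close> gr0_implies_Suc by blast
  let ?tail = "\<Sum>k<m. lc (xc s (Suc k) - xb s) (uc s (Suc k) - ub s)"
  have "(\<Sum>k<Nc. lc (xc (shift_cont Nc s) k - xb s) (uc (shift_cont Nc s) k - ub s))
          = ?tail + lc (xc s Nc - xb s) (ub s - ub s)"
    by (simp add: m shift_cont_def)
  also have "\<dots> = ?tail" using assms by simp
  also have "\<dots> = (\<Sum>k<Nc. lc (xc s k - xb s) (uc s k - ub s)) - lc (xc s 0 - xb s) (uc s 0 - ub s)"
    unfolding m sum.lessThan_Suc_shift by simp
  finally show ?thesis by (simp add: Jc_cost_def shift_cont_def)
qed

lemma cont_feas_shift_cont:
  assumes feas: "cont_feas f X U C cG RG h r Nc lc Vc xref x0 c R Jh s"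
    and "0 < Nc" and "0 \<le> r" and "lc 0 0 = 0"
    and safe_set: "(c', R') = (c, R) \<or> (c', R') = (cG (xc s 1), RG (xc s 1))"
  shows "cont_feas f X U C cG RG h r Nc lc Vc xref (xc s 1) c' R'
           (Jc_cost Nc lc Vc xref s - lc (x0 - xb s) (uc s 0 - ub s)) (shift_cont Nc s)"
proof -
  have dyn: "\<forall>k<Nc. xc s (k+1) = f (xc s k) (uc s k)"
    and adm: "\<forall>k<Nc. xc s (k+1) \<in> X \<and> uc s k \<in> U"
    and obst: "\<forall>k\<le>Nc. h (C (xc s k)) \<ge> 0"
    and eq: "xc s Nc = xb s" "xb s = f (xb s) (ub s)" "xb s \<in> X" "ub s \<in> U"
    and in_safe: "\<forall>k\<le>Nc. norm (C (xc s k) - c) \<le> R - r"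
    and in_gen: "\<forall>k l. k \<le> l \<and> l \<le> Nc \<longrightarrow> norm (C (xc s l) - cG (xc s k)) \<le> RG (xc s k) - r"
    and x0: "xc s 0 = x0"
    using feas unfolding cont_feas_def by auto
  have in_new_safe: "norm (C (xc s l) - c') \<le> R' - r" if "1 \<le> l" "l \<le> Nc" for l
    using safe_set in_safe in_gen that by auto
  have X_next: "xc s (min (k+2) Nc) \<in> X" if "k < Nc" for k
    using adm eq(1,3) by (cases "k+2 \<le> Nc") (auto simp: min_def)
  show ?thesis
    unfolding cont_feas_def
  proof (intro conjI allI impI)
    fix k assume "k < Nc"
    then show "xc (shift_cont Nc s) (k+1) = f (xc (shift_cont Nc s) k) (uc (shift_cont Nc s) k)"
    proof (cases "k+1 < Nc")
      case False
      with \<open>k < Nc\<close> have "k+1 = Nc" by simp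
      then show ?thesis using eq by (simp add: shift_cont_def)
    qed (use dyn in \<open>simp add: shift_cont_def\<close>)
    show "xc (shift_cont Nc s) (k+1) \<in> X"
      using X_next[OF \<open>k < Nc\<close>] by (simp add: shift_cont_def add.assoc)
    show "uc (shift_cont Nc s) k \<in> U" using adm eq by (simp add: shift_cont_def)
  next
    show "C (xb (shift_cont Nc s)) \<in> cball c' R'"
      using in_new_safe[of Nc] \<open>0 < Nc\<close> \<open>0 \<le> r\<close> eq(1)
      by (simp add: shift_cont_def dist_norm norm_minus_commute)
  next
    fix k assume "k \<le> Nc"
    show "norm (C (xc (shift_cont Nc s) k) - c') \<le> R' - r"
      using in_new_safe[of "min (k+1) Nc"] \<open>0 < Nc\<close> by (simp add: shift_cont_def)
  next
    fix k l assume "k \<le> l \<and> l \<le> Nc"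
    then show "norm (C (xc (shift_cont Nc s) l) - cG (xc (shift_cont Nc s) k))
                 \<le> RG (xc (shift_cont Nc s) k) - r"
      using in_gen[rule_format, of "min (k+1) Nc" "min (l+1) Nc"]
      by (simp add: shift_cont_def min_le_iff_disj)
  next
    show "Jc_cost Nc lc Vc xref (shift_cont Nc s)
            \<le> Jc_cost Nc lc Vc xref s - lc (x0 - xb s) (uc s 0 - ub s)"
      using Jc_cost_shift_cont[where lc=lc and Nc=Nc and s=s, OF \<open>0 < Nc\<close> \<open>lc 0 0 = 0\<close> eq(1)] x0
      by simp
  qed (use obst eq \<open>0 < Nc\<close> in \<open>auto simp: shift_cont_def\<close>)
qed

lemma cont_feas_update_nominal [simp]:
  "cont_feas f X U C cG RG h r Nc lc Vc xref x0 c R Jh (s\<lparr>xn := a, un := b\<rparr>)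
     \<longleftrightarrow> cont_feas f X U C cG RG h r Nc lc Vc xref x0 c R Jh s"
  by (simp add: cont_feas_def Jc_cost_def)

lemma cont_feas_body_subset_safe_set:
  assumes "cont_feas f X U C cG RG h r Nc lc Vc xref x0 c R Jh s"
  shows "cball (C x0) r \<subseteq> cball c R"
proof -
  have "norm (C x0 - c) \<le> R - r"
    using assms unfolding cont_feas_def by (metis le0)
  then show ?thesis by (simp add: cball_subset_cball_iff dist_norm)
qed

definition fos_update ::
  "nat \<Rightarrow> (nat \<Rightarrow> 'x \<Rightarrow> 'p::euclidean_space) \<Rightarrow> (nat \<Rightarrow> 'x \<Rightarrow> real) \<Rightarrow> (nat \<Rightarrow> nat \<Rightarrow> 'x)
   \<Rightarrow> (nat \<Rightarrow> nat \<Rightarrow> 'p) \<Rightarrow> (nat \<Rightarrow> nat \<Rightarrow> real) \<Rightarrow> nat \<Rightarrow> nat \<Rightarrow> bool" where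
  "fos_update M cG RG x cS RS i t \<longleftrightarrow>
     (if fos_chi M cG RG x cS RS i t
      then cS i (t+1) = cS i t \<and> RS i (t+1) = RS i t
      else cS i (t+1) = cG i (x i (t+1)) \<and> RS i (t+1) = RG i (x i (t+1)))"

lemma fos_update_cases:
  assumes "fos_update M cG RG x cS RS i t"
  shows "(cS i (t+1), RS i (t+1)) = (cS i t, RS i t)
         \<or> (cS i (t+1), RS i (t+1)) = (cG i (x i (t+1)), RG i (x i (t+1)))"
  using assms unfolding fos_update_def by (auto split: if_splits)

lemma fos_update_preserves_disjoint:
  assumes "i \<in> {1..M}" "j \<in> {1..M}" "i \<noteq> j"
    and disj: "cball (cS i t) (RS i t) \<inter> cball (cS j t) (RS j t) = {}"
    and upd_i: "fos_update M cG RG x cS RS i t" and upd_j: "fos_update M cG RG x cS RS j t"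
  shows "cball (cS i (t+1)) (RS i (t+1)) \<inter> cball (cS j (t+1)) (RS j (t+1)) = {}"
proof (cases "fos_chi M cG RG x cS RS i t")
  case frozen_i: True
  show ?thesis
  proof (cases "fos_chi M cG RG x cS RS j t")
    case True
    then show ?thesis using frozen_i upd_i upd_j disj unfolding fos_update_def by simp
  next
    case False
    then have "cball (cG j (x j (t+1))) (RG j (x j (t+1))) \<inter> cball (cS i t) (RS i t) = {}"
      using \<open>i \<in> {1..M}\<close> \<open>i \<noteq> j\<close> unfolding fos_chi_def by blast
    then show ?thesis using False frozen_i upd_i upd_j unfolding fos_update_def
      by (simp add: Int_commute)
  qed
next
  case False
  then have "cball (cG i (x i (t+1))) (RG i (x i (t+1))) \<inter> cball (cS j t) (RS j t) = {}"
    and "cball (cG i (x i (t+1))) (RG i (x i (t+1))) \<inter> cball (cG j (x j (t+1))) (RG j (x j (t+1))) = {}"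
    using \<open>j \<in> {1..M}\<close> \<open>i \<noteq> j\<close> unfolding fos_chi_def by auto
  then show ?thesis using False upd_i upd_j unfolding fos_update_def by (auto split: if_splits)
qed

lemma fos_update_disjoint_safe_sets:
  assumes init: "\<forall>i\<in>{1..M}. \<forall>j\<in>{1..M}. i \<noteq> j \<longrightarrow>
                   cball (cS i 0) (RS i 0) \<inter> cball (cS j 0) (RS j 0) = {}"
    and upd: "\<forall>i\<in>{1..M}. \<forall>t. fos_update M cG RG x cS RS i t"
  shows "\<forall>i\<in>{1..M}. \<forall>j\<in>{1..M}. i \<noteq> j \<longrightarrow>
           cball (cS i t) (RS i t) \<inter> cball (cS j t) (RS j t) = {}"
proof (induction t)
  case (Suc t)
  show ?case
  proof (intro ballI impI)
    fix i j assume ij: "i \<in> {1..M}" "j \<in> {1..M}" "i \<noteq> j"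
    with Suc upd show "cball (cS i (Suc t)) (RS i (Suc t)) \<inter> cball (cS j (Suc t)) (RS j (Suc t)) = {}"
      using fos_update_preserves_disjoint[OF ij, of cS t RS cG RG x] by simp
  qed
qed (use init in simp)

theorem theorem2:
  fixes M :: nat
    and f :: "nat \<Rightarrow> 'x::real_vector \<Rightarrow> 'u::real_vector \<Rightarrow> 'x"
    and X :: "nat \<Rightarrow> 'x set" and U :: "nat \<Rightarrow> 'u set"
    and C :: "nat \<Rightarrow> 'x \<Rightarrow> 'p::euclidean_space"
    and r :: "nat \<Rightarrow> real"
    and xref :: "nat \<Rightarrow> 'x"
    and cG :: "nat \<Rightarrow> 'x \<Rightarrow> 'p" and RG :: "nat \<Rightarrow> 'x \<Rightarrow> real"
    and h :: "'p \<Rightarrow> real"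
    and Nn Nc :: nat
    and lnom lc :: "nat \<Rightarrow> 'x \<Rightarrow> 'u \<Rightarrow> real"
    and Vn Vc :: "nat \<Rightarrow> 'x \<Rightarrow> 'x \<Rightarrow> real"
    and \<gamma> :: real
    and x :: "nat \<Rightarrow> nat \<Rightarrow> 'x"
    and cS :: "nat \<Rightarrow> nat \<Rightarrow> 'p" and RS :: "nat \<Rightarrow> nat \<Rightarrow> real"
    and Jh :: "nat \<Rightarrow> nat \<Rightarrow> real"
    and sl :: "nat \<Rightarrow> nat \<Rightarrow> ('x, 'u) sol"
  defines "feas \<equiv> \<lambda>i t s. nom_feas (f i) (X i) (U i) Nn (x i t) s \<and>
             cont_feas (f i) (X i) (U i) (C i) (cG i) (RG i) h (r i) Nc (lc i) (Vc i) (xref i)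
               (x i t) (cS i t) (RS i t) (Jh i t) s"
  assumes lin: "\<forall>i\<in>{1..M}. linear (C i)"
    and r_pos: "\<forall>i\<in>{1..M}. r i > 0"
    and h_cont: "continuous_on UNIV h"
    and Nn_pos: "Nn > 0" and Nc_pos: "Nc > 0"
    and gamma_pos: "\<gamma> > 0"
    and Vc_nonneg: "\<forall>i\<in>{1..M}. \<forall>a b. Vc i a b \<ge> 0"
    and lc_nonneg: "\<forall>i\<in>{1..M}. \<forall>a b. lc i a b \<ge> 0"
    \<comment> \<open>closed loop: whenever P_i(t) is feasible, sl i t is an optimal solution of it\<close>
    and optimal: "\<forall>i\<in>{1..M}. \<forall>t. (\<exists>s. feas i t s) \<longrightarrow>
        feas i t (sl i t) \<and>
        (\<forall>s. feas i t s \<longrightarrow> J_cost Nn (lnom i) (Vn i) \<gamma> (Vc i) (xref i) (sl i t)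
                            \<le> J_cost Nn (lnom i) (Vn i) \<gamma> (Vc i) (xref i) s)"
    and dyn: "\<forall>i\<in>{1..M}. \<forall>t. x i (t+1) = f i (x i t) (uc (sl i t) 0)"
    and bound_upd: "\<forall>i\<in>{1..M}. \<forall>t. Jh i (t+1) =
        Jc_cost Nc (lc i) (Vc i) (xref i) (sl i t)
        - lc i (x i t - xb (sl i t)) (uc (sl i t) 0 - ub (sl i t))"
    and fos: "\<forall>i\<in>{1..M}. \<forall>t.
        (if fos_chi M cG RG x cS RS i t
         then cS i (t+1) = cS i t \<and> RS i (t+1) = RS i t
         else cS i (t+1) = cG i (x i (t+1)) \<and> RS i (t+1) = RG i (x i (t+1)))"
    and Jh0: "\<forall>i\<in>{1..M}. Jh i 0 \<ge> 0"
    \<comment> \<open>(i) initial feasibility and disjoint initial safe sets\<close>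
    and init_feas: "\<forall>i\<in>{1..M}. \<exists>s. feas i 0 s"
    and init_disj: "\<forall>i\<in>{1..M}. \<forall>j\<in>{1..M}. i \<noteq> j \<longrightarrow>
        cball (cS i 0) (RS i 0) \<inter> cball (cS j 0) (RS j 0) = {}"
    \<comment> \<open>(ii) nominal completion\<close>
    and nom_compl: "\<forall>i\<in>{1..M}. \<forall>t s.
        cont_feas (f i) (X i) (U i) (C i) (cG i) (RG i) h (r i) Nc (lc i) (Vc i) (xref i)
          (x i (t+1)) (cS i (t+1)) (RS i (t+1)) (Jh i (t+1)) s \<longrightarrow>
        (\<exists>xn' un'. nom_feas (f i) (X i) (U i) Nn (x i (t+1)) (s\<lparr>xn := xn', un := un'\<rparr>))"
    \<comment> \<open>(iii)\<close>
    and lc_zero: "\<forall>i\<in>{1..M}. lc i 0 0 = 0"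
  shows "\<forall>t. \<forall>i\<in>{1..M}. \<forall>j\<in>{1..M}. i \<noteq> j \<longrightarrow>
           cball (C i (x i t)) (r i) \<inter> cball (C j (x j t)) (r j) = {}"
proof -
  have upd: "\<forall>i\<in>{1..M}. \<forall>t. fos_update M cG RG x cS RS i t"
    using fos unfolding fos_update_def by blast
  have feasible: "\<exists>s. feas i t s" if i: "i \<in> {1..M}" for i t
  proof (induction t)
    case 0
    then show ?case using init_feas i by blast
  next
    case (Suc t)
    let ?s = "sl i t"
    have cf: "cont_feas (f i) (X i) (U i) (C i) (cG i) (RG i) h (r i) Nc (lc i) (Vc i) (xref i)
                (x i t) (cS i t) (RS i t) (Jh i t) ?s"
      using Suc optimal i unfolding feas_def by blast
    have "x i (t+1) = xc ?s 1"
      using cf dyn i Nc_pos unfolding cont_feas_def by (metis One_nat_def add_0)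
    then have "cont_feas (f i) (X i) (U i) (C i) (cG i) (RG i) h (r i) Nc (lc i) (Vc i) (xref i)
                 (x i (t+1)) (cS i (t+1)) (RS i (t+1)) (Jh i (t+1)) (shift_cont Nc ?s)"
      using cont_feas_shift_cont[OF cf Nc_pos] fos_update_cases[of M cG RG x cS RS i t]
        upd bound_upd r_pos lc_zero i by (simp add: less_imp_le)
    then show ?case
      using nom_compl i unfolding feas_def by (metis Suc_eq_plus1 cont_feas_update_nominal)
  qed
  have body: "cball (C i (x i t)) (r i) \<subseteq> cball (cS i t) (RS i t)" if "i \<in> {1..M}" for i t
    using feasible[OF that, of t] cont_feas_body_subset_safe_set unfolding feas_def by blast
  show ?thesis
    using body fos_update_disjoint_safe_sets[OF init_disj upd] by blast
qed

end
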